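(* For every smooth $A[G]$-module $V$ and every $1\le r\le\infty$, the canonical map $\mathcal{F}_r(V)\to\mathcal{L}_r(V)$ (inclusion into $V^{U_1(\varpi^r)}$ followed by localization at $\mathfrak n$) is injective.
   Context: Setting: $F/\mathbb{Q}_p$ finite (integers $\mathcal{O}_F$, uniformizer $\varpi$, residue field $k_F$), $K/\mathbb{Q}_\ell$ finite with $\ell\ne p$ (integers $\mathcal{O}$, maximal ideal $\lambda$), $G=\mathrm{GL}_n(F)$ with $\ell\nmid\#\mathrm{GL}_n(k_F)$, $A$ an $\mathcal{O}$-algebra. $U_1(\varpi^r)$ is the mirahoric subgroup (elements of $\mathrm{GL}_n(\mathcal{O}_F)$ with last row $\equiv(0,\dots,0,1)\bmod\varpi^r$; for $r=\infty$, the mirabolic subgroup $P(\mathcal{O}_F)$). The commuting operators $U^{(j)}=[U_1(\varpi^r)\mathrm{diag}(\varpi1_j,1_{n-j})U_1(\varpi^r)]$, $1\le j\le n-1$, make $V^{U_1(\varpi^r)}$ an $\mathcal{O}[X_1,\dots,X_{n-1}]$-module ($X_j\mapsto U^{(j)}$). $\mathfrak n=(\lambda,X_1,\dots,X_{n-1})$, $\mathcal{L}_r(V)=(V^{U_1(\varpi^r)})_{\mathfrak n}$, and $\mathcal{F}_r(V)=\{x\in V^{U_1(\varpi^r)}:U^{(1)}x=\dots=U^{(n-1)}x=0\}$. *)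

theory Defs
  imports "Jordan_Normal_Form.Determinant" "HOL-Library.Extended_Nat"
begin

(* v :: 'f => int is a normalised discrete valuation; the value at 0 is irrelevant,
   "vge v x N" means v(x) >= N with the convention v(0) = +infinity. *)
definition vge :: "('f::zero \<Rightarrow> int) \<Rightarrow> 'f \<Rightarrow> int \<Rightarrow> bool" where
  "vge v x N \<longleftrightarrow> x = 0 \<or> N \<le> v x"

definition integers :: "('f::zero \<Rightarrow> int) \<Rightarrow> 'f set" where
  "integers v = {x. vge v x 0}"

definition maxideal :: "('f::zero \<Rightarrow> int) \<Rightarrow> 'f set" where
  "maxideal v = {x. vge v x 1}"

definition residue_classes :: "('f::ab_group_add \<Rightarrow> int) \<Rightarrow> 'f set set" where
  "residue_classes v = integers v //
     {(x,y). x \<in> integers v \<and> y \<in> integers v \<and> vge v (x - y) 1}"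

(* (F, v) is a finite extension of Q_p: a field of characteristic 0, complete for a
   discrete valuation v (normalised, surjective onto Z), with finite residue field of
   characteristic p. *)
definition local_field_over :: "nat \<Rightarrow> ('f::field_char_0 \<Rightarrow> int) \<Rightarrow> bool" where
  "local_field_over p v \<longleftrightarrow> prime p \<and>
     (\<forall>x y. x \<noteq> 0 \<longrightarrow> y \<noteq> 0 \<longrightarrow> v (x * y) = v x + v y) \<and>
     (\<forall>x y. x \<noteq> 0 \<longrightarrow> y \<noteq> 0 \<longrightarrow> x + y \<noteq> 0 \<longrightarrow> min (v x) (v y) \<le> v (x + y)) \<and>
     (\<exists>u. u \<noteq> 0 \<and> v u = 1) \<and>
     (\<forall>s::nat \<Rightarrow> 'f. (\<forall>N. \<exists>M. \<forall>i\<ge>M. \<forall>k\<ge>M. vge v (s i - s k) N) \<longrightarrow>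
          (\<exists>L. \<forall>N. \<exists>M. \<forall>i\<ge>M. vge v (s i - L) N)) \<and>
     finite (residue_classes v) \<and>
     0 < v (of_nat p)"

(* congruence a == b mod varpi^r, r in {1,2,...} \<union> {infinity}; for r = infinity it is equality *)
definition congr :: "('f::ab_group_add \<Rightarrow> int) \<Rightarrow> 'f \<Rightarrow> 'f \<Rightarrow> enat \<Rightarrow> bool" where
  "congr v a b r \<longleftrightarrow> a = b \<or> (vge v (a - b) 0 \<and> r \<le> enat (nat (v (a - b))))"

definition GLn :: "nat \<Rightarrow> 'f::field mat set" where
  "GLn n = {g \<in> carrier_mat n n. det g \<noteq> 0}"

definition GL_O :: "('f::field \<Rightarrow> int) \<Rightarrow> nat \<Rightarrow> 'f mat set" where
  "GL_O v n = {g \<in> carrier_mat n n. (\<forall>i<n. \<forall>k<n. g $$ (i,k) \<in> integers v) \<and>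
                  det g \<noteq> 0 \<and> v (det g) = 0}"

(* mirahoric subgroup U_1(varpi^r); for r = infinity the mirabolic P(O_F) *)
definition mirahoric :: "('f::field \<Rightarrow> int) \<Rightarrow> nat \<Rightarrow> enat \<Rightarrow> 'f mat set" where
  "mirahoric v n r = {g \<in> GL_O v n. (\<forall>k<n-1. congr v (g $$ (n-1,k)) 0 r) \<and>
                                     congr v (g $$ (n-1,n-1)) 1 r}"

(* principal congruence subgroup 1 + varpi^m M_n(O_F) (a neighbourhood basis of 1 for m >= 1) *)
definition princ_cong :: "('f::field \<Rightarrow> int) \<Rightarrow> nat \<Rightarrow> nat \<Rightarrow> 'f mat set" where
  "princ_cong v n m = {g \<in> carrier_mat n n.
      \<forall>i<n. \<forall>k<n. vge v (g $$ (i,k) - (if i = k then 1 else 0)) (int m)}"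

definition diag_mat :: "'f::field \<Rightarrow> nat \<Rightarrow> nat \<Rightarrow> 'f mat" where
  "diag_mat u n j = mat n n (\<lambda>(i,k). if i = k then (if i < j then u else 1) else 0)"

definition dcoset :: "'f::field mat set \<Rightarrow> 'f mat \<Rightarrow> 'f mat set" where
  "dcoset U g = {u1 * g * u2 | u1 u2. u1 \<in> U \<and> u2 \<in> U}"

definition lcosets :: "'f::field mat set \<Rightarrow> 'f mat set \<Rightarrow> 'f mat set set" where
  "lcosets U D = (\<lambda>h. (\<lambda>u. h * u) ` U) ` D"

(* [U g U] x = sum over hU in UgU/U of h.x  (for U-invariant x) *)
definition hecke :: "('f::field mat \<Rightarrow> 'v::comm_monoid_add \<Rightarrow> 'v) \<Rightarrow> 'f mat set \<Rightarrow> 'f mat \<Rightarrow> 'v \<Rightarrow> 'v" where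
  "hecke act U g x = (\<Sum>c\<in>lcosets U (dcoset U g). act (SOME h. h \<in> c) x)"

definition invariants :: "('f::field mat \<Rightarrow> 'v \<Rightarrow> 'v) \<Rightarrow> 'f mat set \<Rightarrow> 'v set" where
  "invariants act U = {x. \<forall>g\<in>U. act g x = x}"

definition Uop :: "('f::field \<Rightarrow> int) \<Rightarrow> 'f \<Rightarrow> nat \<Rightarrow> enat \<Rightarrow> ('f mat \<Rightarrow> 'v::comm_monoid_add \<Rightarrow> 'v) \<Rightarrow> nat \<Rightarrow> 'v \<Rightarrow> 'v" where
  "Uop v u n r act j = hecke act (mirahoric v n r) (diag_mat u n j)"

definition Fr :: "('f::field \<Rightarrow> int) \<Rightarrow> 'f \<Rightarrow> nat \<Rightarrow> enat \<Rightarrow> ('f mat \<Rightarrow> 'v::comm_monoid_add \<Rightarrow> 'v) \<Rightarrow> 'v set" where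
  "Fr v u n r act = {x \<in> invariants act (mirahoric v n r). \<forall>j\<in>{1..n-1}. Uop v u n r act j x = 0}"

(* polynomials in O[X_1,...,X_{n-1}]: finitely supported coefficient functions on
   monomials (exponent vectors m :: nat => nat supported in {1..n-1}) with coefficients in O *)
definition OX :: "('k::field \<Rightarrow> int) \<Rightarrow> nat \<Rightarrow> ((nat \<Rightarrow> nat) \<Rightarrow> 'k) set" where
  "OX w n = {f. finite {m. f m \<noteq> 0} \<and>
                (\<forall>m. f m \<noteq> 0 \<longrightarrow> (\<forall>j. m j \<noteq> 0 \<longrightarrow> 1 \<le> j \<and> j \<le> n - 1)) \<and>
                (\<forall>m. f m \<in> integers w)}"

(* the maximal ideal n = (lambda, X_1, ..., X_{n-1}) : polynomials whose constant term lies in lambda *)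
definition nideal :: "('k::field \<Rightarrow> int) \<Rightarrow> nat \<Rightarrow> ((nat \<Rightarrow> nat) \<Rightarrow> 'k) set" where
  "nideal w n = {f \<in> OX w n. f (\<lambda>_. 0) \<in> maxideal w}"

definition mono_op :: "(nat \<Rightarrow> 'v \<Rightarrow> 'v) \<Rightarrow> nat \<Rightarrow> (nat \<Rightarrow> nat) \<Rightarrow> 'v \<Rightarrow> 'v" where
  "mono_op T n m = foldr (\<lambda>j h. (T j ^^ m j) \<circ> h) [1..<n] id"

(* action of a polynomial f : X_j acts as T j, constants c act via c . x = alg c . x *)
definition poly_op :: "('a \<Rightarrow> 'v::comm_monoid_add \<Rightarrow> 'v) \<Rightarrow> ('k::zero \<Rightarrow> 'a) \<Rightarrow> (nat \<Rightarrow> 'v \<Rightarrow> 'v) \<Rightarrow> nat \<Rightarrow>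
                       ((nat \<Rightarrow> nat) \<Rightarrow> 'k) \<Rightarrow> 'v \<Rightarrow> 'v" where
  "poly_op sa alg T n f x = (\<Sum>m\<in>{m. f m \<noteq> 0}. sa (alg (f m)) (mono_op T n m x))"

(* x/1 = y/1 in the localisation M_n :  exists s notin n with s.(x - y) = 0 *)
definition loc_eq :: "('k::field \<Rightarrow> int) \<Rightarrow> ('a \<Rightarrow> 'v::ab_group_add \<Rightarrow> 'v) \<Rightarrow> ('k \<Rightarrow> 'a) \<Rightarrow>
                      (nat \<Rightarrow> 'v \<Rightarrow> 'v) \<Rightarrow> nat \<Rightarrow> 'v \<Rightarrow> 'v \<Rightarrow> bool" where
  "loc_eq w sa alg T n x y \<longleftrightarrow> (\<exists>s \<in> OX w n - nideal w n. poly_op sa alg T n s (x - y) = 0)"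

definition O_algebra :: "('k::field \<Rightarrow> int) \<Rightarrow> ('k \<Rightarrow> 'a::ring_1) \<Rightarrow> bool" where
  "O_algebra w alg \<longleftrightarrow> alg 1 = 1 \<and>
     (\<forall>a\<in>integers w. \<forall>b\<in>integers w. alg (a + b) = alg a + alg b \<and> alg (a * b) = alg a * alg b) \<and>
     (\<forall>c\<in>integers w. \<forall>a. alg c * a = a * alg c)"

definition smooth_module :: "('f::field \<Rightarrow> int) \<Rightarrow> nat \<Rightarrow> ('a::ring_1 \<Rightarrow> 'v::ab_group_add \<Rightarrow> 'v) \<Rightarrow>
                             ('f mat \<Rightarrow> 'v \<Rightarrow> 'v) \<Rightarrow> bool" where
  "smooth_module v n sa act \<longleftrightarrow>
     (\<forall>a b x. sa (a + b) x = sa a x + sa b x) \<and>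
     (\<forall>a x y. sa a (x + y) = sa a x + sa a y) \<and>
     (\<forall>a b x. sa (a * b) x = sa a (sa b x)) \<and>
     (\<forall>x. sa 1 x = x) \<and>
     (\<forall>x. act (1\<^sub>m n) x = x) \<and>
     (\<forall>g\<in>GLn n. \<forall>h\<in>GLn n. \<forall>x. act (g * h) x = act g (act h x)) \<and>
     (\<forall>g\<in>GLn n. \<forall>x y. act g (x + y) = act g x + act g y) \<and>
     (\<forall>g\<in>GLn n. \<forall>a x. act g (sa a x) = sa a (act g x)) \<and>
     (\<forall>x. \<exists>m\<ge>1. \<forall>g\<in>princ_cong v n m. act g x = x)"

end

theory Submission
  imports Defs
begin

text \<open>
  If x, y lie in F_r(V) and x/1 = y/1 in the localisation, there is a polynomial s outside
  the maximal ideal n = (lambda, X_1, ..., X_{n-1}) with s . (x - y) = 0.  Since the Hecke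
  operators U^{(j)} are additive, z = x - y is again killed by every U^{(j)}; hence every
  monomial of s of positive degree acts on z as zero, and s acts on z through its constant
  term c alone.  As s is not in n, c is an integral element of valuation 0, i.e. a unit of
  O, so c . z = 0 forces z = 0.
\<close>

lemma GLn_mult: "A \<in> GLn n \<Longrightarrow> B \<in> GLn n \<Longrightarrow> A * B \<in> GLn n"
  unfolding GLn_def by (auto simp: det_mult)

lemma diag_mat_GLn:
  assumes "(u::'f::field) \<noteq> 0"
  shows "Defs.diag_mat u n j \<in> GLn n"
proof -
  let ?D = "Defs.diag_mat u n j"
  have carrier: "?D \<in> carrier_mat n n" unfolding Defs.diag_mat_def by auto
  have "upper_triangular ?D" unfolding upper_triangular_def Defs.diag_mat_def by auto
  then have "det ?D = prod_list (Matrix.diag_mat ?D)" using det_upper_triangular carrier by blast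
  moreover have "0 \<notin> set (Matrix.diag_mat ?D)"
    using assms unfolding Matrix.diag_mat_def Defs.diag_mat_def by auto
  ultimately have "det ?D \<noteq> 0" by (simp add: prod_list_zero_iff)
  with carrier show ?thesis unfolding GLn_def by auto
qed

lemma coset_representative_GLn:
  assumes c: "c \<in> lcosets U (dcoset U g)" and U: "U \<subseteq> GLn n" and g: "g \<in> GLn n"
  shows "(SOME h. h \<in> c) \<in> GLn n"
proof -
  from c obtain h0 where h0: "h0 \<in> dcoset U g" and c_eq: "c = (\<lambda>u. h0 * u) ` U"
    unfolding lcosets_def by auto
  from h0 obtain u1 u2 where "h0 = u1 * g * u2" "u1 \<in> U" "u2 \<in> U"
    unfolding dcoset_def by auto
  then have "h0 \<in> GLn n" using U g by (auto intro!: GLn_mult)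
  then have c_sub: "c \<subseteq> GLn n" using c_eq U by (auto intro!: GLn_mult)
  have "c \<noteq> {}" using c_eq \<open>u1 \<in> U\<close> by auto
  then have "(SOME h. h \<in> c) \<in> c" by (meson ex_in_conv someI_ex)
  with c_sub show ?thesis by auto
qed

lemma hecke_additive:
  fixes act :: "'f::field mat \<Rightarrow> 'v::ab_group_add \<Rightarrow> 'v"
  assumes act_add: "\<forall>h\<in>GLn n. additive (act h)"
    and U: "U \<subseteq> GLn n" and g: "g \<in> GLn n"
  shows "additive (hecke act U g)"
proof
  fix x y
  show "hecke act U g (x + y) = hecke act U g x + hecke act U g y"
    unfolding hecke_def sum.distrib[symmetric]
    using coset_representative_GLn[OF _ U g] act_add by (intro sum.cong) (auto simp: additive.add)
qed

lemma Uop_additive: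
  fixes act :: "'f::field mat \<Rightarrow> 'v::ab_group_add \<Rightarrow> 'v"
  assumes "\<forall>h\<in>GLn n. additive (act h)" and "u \<noteq> 0"
  shows "additive (Uop v u n r act j)"
proof -
  have "mirahoric v n r \<subseteq> GLn n" unfolding mirahoric_def GL_O_def GLn_def by auto
  then show ?thesis
    unfolding Uop_def using hecke_additive assms diag_mat_GLn by blast
qed

lemma foldr_funpow_on_kernel:
  fixes T :: "'b \<Rightarrow> 'v::zero \<Rightarrow> 'v"
  assumes kill: "\<forall>j\<in>set xs. T j z = 0" and fix0: "\<forall>j\<in>set xs. T j 0 = 0"
  shows "foldr (\<lambda>j h. (T j ^^ m j) \<circ> h) xs id z = (if \<forall>j\<in>set xs. m j = 0 then z else 0)"
  using assms
proof (induction xs)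
  case Nil
  then show ?case by simp
next
  case (Cons a xs)
  have pow0: "(T a ^^ k) 0 = 0" for k
    using Cons.prems(2) by (induction k) auto
  let ?f = "\<lambda>j h. (T j ^^ m j) \<circ> h"
  have step: "foldr ?f (a # xs) id z = (T a ^^ m a) (foldr ?f xs id z)" by simp
  have IH: "foldr ?f xs id z = (if \<forall>j\<in>set xs. m j = 0 then z else 0)"
    by (rule Cons.IH) (use Cons.prems in auto)
  show ?case
  proof (cases "m a")
    case 0
    then show ?thesis unfolding step IH by simp
  next
    case (Suc k)
    have "(T a ^^ m a) z = 0"
      using Suc Cons.prems(1) pow0 by (simp add: funpow_Suc_right del: funpow.simps)
    then show ?thesis unfolding step IH using Suc pow0 Cons.prems(2) by auto
  qed
qed

lemma mono_op_constant: "mono_op T n (\<lambda>_. 0) = id"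
proof -
  have trivial: "foldr (\<lambda>j h. (T j ^^ 0) \<circ> h) xs id = id" for xs
    by (induction xs) auto
  show ?thesis unfolding mono_op_def by (rule trivial)
qed

lemma poly_op_on_kernel:
  fixes sa :: "'a \<Rightarrow> 'v::comm_monoid_add \<Rightarrow> 'v"
  assumes s: "s \<in> OX w n" and c: "s (\<lambda>_. 0) \<noteq> 0"
    and kill: "\<forall>j\<in>{1..<n}. T j z = 0" and fix0: "\<forall>j\<in>{1..<n}. T j 0 = 0"
    and sa0: "\<forall>a. sa a 0 = 0"
  shows "poly_op sa alg T n s z = sa (alg (s (\<lambda>_. 0))) z"
proof -
  define M where "M = {m. s m \<noteq> 0}"
  have "finite M" using s unfolding OX_def M_def by auto
  moreover have "(\<lambda>_. 0) \<in> M" using c unfolding M_def by auto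
  ultimately have split: "poly_op sa alg T n s z = sa (alg (s (\<lambda>_. 0))) (mono_op T n (\<lambda>_. 0) z)
      + (\<Sum>m\<in>M - {\<lambda>_. 0}. sa (alg (s m)) (mono_op T n m z))"
    unfolding poly_op_def M_def[symmetric] by (rule sum.remove)
  have "mono_op T n m z = 0" if m: "m \<in> M - {\<lambda>_. 0}" for m
  proof -
    obtain j where "m j \<noteq> 0" using m by (metis DiffE ext insertI1)
    moreover have "1 \<le> j \<and> j \<le> n - 1" using s m \<open>m j \<noteq> 0\<close> unfolding OX_def M_def by auto
    then have "j \<in> set [1..<n]" by auto
    ultimately show ?thesis
      unfolding mono_op_def using foldr_funpow_on_kernel[of "[1..<n]" T z m] kill fix0 by auto
  qed
  then have "(\<Sum>m\<in>M - {\<lambda>_. 0}. sa (alg (s m)) (mono_op T n m z)) = 0"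
    using sa0 by (intro sum.neutral) simp
  with split show ?thesis by (simp add: mono_op_constant)
qed

lemma unit_inverse_integral:
  fixes w :: "'k::field \<Rightarrow> int"
  assumes mult: "\<forall>x y. x \<noteq> 0 \<longrightarrow> y \<noteq> 0 \<longrightarrow> w (x * y) = w x + w y"
    and c: "c \<in> integers w" "c \<notin> maxideal w"
  shows "inverse c \<in> integers w"
proof -
  have c0: "c \<noteq> 0" and wc: "w c = 0"
    using c unfolding integers_def maxideal_def vge_def by auto
  have "w 1 = 0" using mult[rule_format, of 1 1] by simp
  moreover have "w (c * inverse c) = w c + w (inverse c)"
    using mult[rule_format, of c "inverse c"] c0 by simp
  ultimately have "w (inverse c) = 0" using c0 wc by simp
  then show ?thesis unfolding integers_def vge_def by simp
qed

lemma smooth_module_scalar_zero: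
  assumes "smooth_module v n sa act"
  shows "sa a 0 = 0"
  using assms unfolding smooth_module_def by (metis add_cancel_right_right)

lemma unit_action_injective:
  assumes A: "O_algebra w alg" and V: "smooth_module v n sa act"
    and c: "c \<in> integers w" "c \<noteq> 0" and c_inv: "inverse c \<in> integers w"
    and cz: "sa (alg c) z = 0"
  shows "z = 0"
proof -
  have "alg (inverse c) * alg c = 1"
    using A c c_inv unfolding O_algebra_def by (metis field_class.field_inverse)
  then have "z = sa (alg (inverse c) * alg c) z" using V unfolding smooth_module_def by simp
  also have "\<dots> = sa (alg (inverse c)) (sa (alg c) z)" using V unfolding smooth_module_def by blast
  also have "\<dots> = 0" using cz smooth_module_scalar_zero[OF V] by simp
  finally show ?thesis .
qed

theorem lemma4:
  fixes v :: "'f::field_char_0 \<Rightarrow> int" and w :: "'k::field_char_0 \<Rightarrow> int"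
    and p l n :: nat and u :: 'f and r :: enat
    and alg :: "'k \<Rightarrow> 'a::ring_1" and sa :: "'a \<Rightarrow> 'v::ab_group_add \<Rightarrow> 'v"
    and act :: "'f mat \<Rightarrow> 'v \<Rightarrow> 'v"
  assumes F: "local_field_over p v" and unif: "u \<noteq> 0" "v u = 1"
    and K: "local_field_over l w" and lp: "l \<noteq> p"
    and n: "1 \<le> n"
    and ndiv: "\<not> l dvd (\<Prod>i<n. card (residue_classes v) ^ n - card (residue_classes v) ^ i)"
    and A: "O_algebra w alg"
    and V: "smooth_module v n sa act"
    and r: "1 \<le> r"
  shows "\<forall>x\<in>Fr v u n r act. \<forall>y\<in>Fr v u n r act.
           loc_eq w sa alg (Uop v u n r act) n x y \<longrightarrow> x = y"
proof (intro ballI impI)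
  fix x y assume x: "x \<in> Fr v u n r act" and y: "y \<in> Fr v u n r act"
    and eq: "loc_eq w sa alg (Uop v u n r act) n x y"
  let ?T = "Uop v u n r act"
  have "\<forall>h\<in>GLn n. additive (act h)"
    using V unfolding smooth_module_def by (auto intro: additive.intro)
  then have T_add: "additive (?T j)" for j using Uop_additive unif(1) by blast
  have sa0: "\<forall>a. sa a 0 = 0" using smooth_module_scalar_zero[OF V] by blast
  have kill: "\<forall>j\<in>{1..<n}. ?T j (x - y) = 0"
    using x y T_add unfolding Fr_def by (auto simp: additive.diff)
  from eq obtain s where s: "s \<in> OX w n" "s \<notin> nideal w n"
    and sz: "poly_op sa alg ?T n s (x - y) = 0"
    unfolding loc_eq_def by auto
  define c where "c = s (\<lambda>_. 0)"
  have c: "c \<in> integers w" "c \<notin> maxideal w"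
    using s unfolding OX_def nideal_def c_def by auto
  then have "c \<noteq> 0" unfolding maxideal_def vge_def by auto
  then have s_const: "s (\<lambda>_. 0) \<noteq> 0" unfolding c_def .
  have fix0: "\<forall>j\<in>{1..<n}. ?T j 0 = 0" using T_add additive.zero by blast
  have "poly_op sa alg ?T n s (x - y) = sa (alg c) (x - y)"
    unfolding c_def
    by (rule poly_op_on_kernel[where T = ?T and sa = sa and z = "x - y",
          OF s(1) s_const kill fix0 sa0])
  with sz have "sa (alg c) (x - y) = 0" by simp
  moreover have "inverse c \<in> integers w"
    using unit_inverse_integral c K unfolding local_field_over_def by blast
  ultimately have "x - y = 0" using unit_action_injective[OF A V] c \<open>c \<noteq> 0\<close> by blast
  then show "x = y" by simp
qed

end
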